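(* Let $\Gamma$, $\varphi$, $\Xi$, $(\cdot)^\flat$ and $\mathscr{M}$ be as in the context. For every $\xi\in\Xi$, every base $\mathscr{X}\supseteq\mathscr{M}$ and every finite multiset of atoms $U$: $\Vdash^{U}_{\mathscr{X}}\xi^\flat$ if and only if $\Vdash^{U}_{\mathscr{X}}\xi$.
   Context: Fix a countably infinite set $\mathbb{A}$ of atoms. IMLL formulas: $\varphi::= p\in\mathbb{A}\mid\varphi\otimes\varphi\mid \mathrm{I}\mid\varphi\multimap\varphi$; multisets are finite, "$,$" is multiset union. An atomic rule is $(P_1\triangleright p_1,\dots,P_n\triangleright p_n)\Rightarrow p$ ($n\ge0$, $P_i$ finite multisets of atoms, $\triangleright p$ abbreviating $\emptyset\triangleright p$); a base is a set of atomic rules. Derivability $\vdash_{\mathscr{B}}$ is the least relation with (Ref) $[p]\vdash_{\mathscr{B}}p$; (App) if $(P_1\triangleright p_1,\dots,P_n\triangleright p_n)\Rightarrow p\in\mathscr{B}$ and $S_i,P_i\vdash_{\mathscr{B}}p_i$ for all $i$, then $S_1,\dots,S_n\vdash_{\mathscr{B}}p$. Support: (At) $\Vdash^{P}_{\mathscr{B}}p$ iff $P\vdash_{\mathscr{B}}p$; ($\otimes$) $\Vdash^{P}_{\mathscr{B}}\varphi\otimes\psi$ iff for every $\mathscr{X}\supseteq\mathscr{B}$, multiset of atoms $U$, atom $p$, if $\varphi,\psi\Vdash^{U}_{\mathscr{X}}p$ then $\Vdash^{P,U}_{\mathscr{X}}p$; ($\mathrm{I}$) $\Vdash^{P}_{\mathscr{B}}\mathrm{I}$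 iff for every $\mathscr{X}\supseteq\mathscr{B}$, $U$, $p$, if $\Vdash^{U}_{\mathscr{X}}p$ then $\Vdash^{P,U}_{\mathscr{X}}p$; ($\multimap$) $\Vdash^{P}_{\mathscr{B}}\varphi\multimap\psi$ iff $\varphi\Vdash^{P}_{\mathscr{B}}\psi$; (comma) for nonempty $\Gamma,\Delta$, $\Vdash^{P}_{\mathscr{B}}\Gamma,\Delta$ iff $P=U,V$ for some $U,V$ with $\Vdash^{U}_{\mathscr{B}}\Gamma$, $\Vdash^{V}_{\mathscr{B}}\Delta$ (singleton $[\varphi]$ supported iff $\varphi$ is); (Inf) for nonempty $\Gamma$, $\Gamma\Vdash^{P}_{\mathscr{B}}\varphi$ iff for every $\mathscr{X}\supseteq\mathscr{B}$ and $U$, if $\Vdash^{U}_{\mathscr{X}}\Gamma$ then $\Vdash^{P,U}_{\mathscr{X}}\varphi$. Fix a finite multiset $\Gamma$ and formula $\varphi$; $\Xi$ is the set of all subformulas of formulas in $\Gamma$ and of $\varphi$. $(\cdot)^\flat:\Xi\to\mathbb{A}$ is an injection with $p^\flat=p$ for atoms $p\in\Xi$ and, for non-atomic $\xi$, $\xi^\flat$ an atom not occurring in $\Xi$. The base $\mathscr{M}$ consists of: for each $\sigma\multimap\tau\in\Xi$, $(\sigma^\flat\triangleright\tau^\flat)\Rightarrow(\sigma\multimap\tau)^\flat$ and $(\triangleright(\sigma\multimap\tau)^\flat,\triangleright\sigma^\flat)\Rightarrow\tau^\flat$; for each $\sigma\otimes\tau\in\Xi$, $(\triangleright\sigma^\flat,\triangleright\tau^\flat)\Rightarrow(\sigma\otimes\tau)^\flat$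 and, for every atom $p$, $(\triangleright(\sigma\otimes\tau)^\flat,\ \sigma^\flat,\tau^\flat\triangleright p)\Rightarrow p$; if $\mathrm{I}\in\Xi$, $\Rightarrow\mathrm{I}^\flat$ and, for every atom $p$, $(\triangleright\mathrm{I}^\flat,\triangleright p)\Rightarrow p$. *)

theory Defs
  imports Main "HOL-Library.Multiset" "HOL-Library.Countable"
begin

datatype 'a fml = At 'a | Tensor "'a fml" "'a fml" | One | Lolli "'a fml" "'a fml"

text \<open>An atomic rule (P1|>p1,...,Pn|>pn) => p is represented as the pair
  of the premise list [(P1,p1),...,(Pn,pn)] and the conclusion p.\<close>
type_synonym 'a rule = "('a multiset \<times> 'a) list \<times> 'a"
type_synonym 'a base = "'a rule set"

inductive deriv :: "'a base \<Rightarrow> 'a multiset \<Rightarrow> 'a \<Rightarrow> bool" where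
  Ref: "deriv B {#p#} p"
| App: "(prems, p) \<in> B \<Longrightarrow>
        list_all2 (\<lambda>S Pq. deriv B (S + fst Pq) (snd Pq)) Ss prems \<Longrightarrow>
        deriv B (sum_list Ss) p"

text \<open>Support of a single formula. The clauses for tensor and linear implication
  unfold the (Inf) and (comma) clauses for the contexts [phi,psi] and [phi].\<close>
primrec supp :: "'a base \<Rightarrow> 'a multiset \<Rightarrow> 'a fml \<Rightarrow> bool" where
  "supp B P (At p) \<longleftrightarrow> deriv B P p"
| "supp B P (Tensor \<phi> \<psi>) \<longleftrightarrow>
     (\<forall>X U p. B \<subseteq> X \<longrightarrow>
        (\<forall>Y V W. X \<subseteq> Y \<longrightarrow> supp Y V \<phi> \<longrightarrow> supp Y W \<psi> \<longrightarrow> deriv Y (U + (V + W)) p)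
        \<longrightarrow> deriv X (P + U) p)"
| "supp B P One \<longleftrightarrow> (\<forall>X U p. B \<subseteq> X \<longrightarrow> deriv X U p \<longrightarrow> deriv X (P + U) p)"
| "supp B P (Lolli \<phi> \<psi>) \<longleftrightarrow>
     (\<forall>X U. B \<subseteq> X \<longrightarrow> supp X U \<phi> \<longrightarrow> supp X (P + U) \<psi>)"

primrec subfmls :: "'a fml \<Rightarrow> 'a fml set" where
  "subfmls (At p) = {At p}"
| "subfmls (Tensor a b) = insert (Tensor a b) (subfmls a \<union> subfmls b)"
| "subfmls One = {One}"
| "subfmls (Lolli a b) = insert (Lolli a b) (subfmls a \<union> subfmls b)"

primrec fatoms :: "'a fml \<Rightarrow> 'a set" where
  "fatoms (At p) = {p}"
| "fatoms (Tensor a b) = fatoms a \<union> fatoms b"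
| "fatoms One = {}"
| "fatoms (Lolli a b) = fatoms a \<union> fatoms b"

definition Xi :: "'a fml multiset \<Rightarrow> 'a fml \<Rightarrow> 'a fml set" where
  "Xi \<Gamma> \<phi> = (\<Union>\<gamma>\<in>set_mset \<Gamma>. subfmls \<gamma>) \<union> subfmls \<phi>"

definition is_atomic :: "'a fml \<Rightarrow> bool" where
  "is_atomic \<xi> \<longleftrightarrow> (\<exists>p. \<xi> = At p)"

definition flat_ok :: "'a fml set \<Rightarrow> ('a fml \<Rightarrow> 'a) \<Rightarrow> bool" where
  "flat_ok \<Xi> fl \<longleftrightarrow> inj_on fl \<Xi>
     \<and> (\<forall>p. At p \<in> \<Xi> \<longrightarrow> fl (At p) = p)
     \<and> (\<forall>\<xi>\<in>\<Xi>. \<not> is_atomic \<xi> \<longrightarrow> fl \<xi> \<notin> (\<Union>\<eta>\<in>\<Xi>. fatoms \<eta>))"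

definition baseM :: "'a fml set \<Rightarrow> ('a fml \<Rightarrow> 'a) \<Rightarrow> 'a base" where
  "baseM \<Xi> fl =
     {([({#fl \<sigma>#}, fl \<tau>)], fl (Lolli \<sigma> \<tau>)) | \<sigma> \<tau>. Lolli \<sigma> \<tau> \<in> \<Xi>}
   \<union> {([({#}, fl (Lolli \<sigma> \<tau>)), ({#}, fl \<sigma>)], fl \<tau>) | \<sigma> \<tau>. Lolli \<sigma> \<tau> \<in> \<Xi>}
   \<union> {([({#}, fl \<sigma>), ({#}, fl \<tau>)], fl (Tensor \<sigma> \<tau>)) | \<sigma> \<tau>. Tensor \<sigma> \<tau> \<in> \<Xi>}
   \<union> {([({#}, fl (Tensor \<sigma> \<tau>)), ({#fl \<sigma>, fl \<tau>#}, p)], p) | \<sigma> \<tau> p. Tensor \<sigma> \<tau> \<in> \<Xi>}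
   \<union> (if One \<in> \<Xi> then {([], fl One)} else {})
   \<union> {([({#}, fl One), ({#}, p)], p) | p. One \<in> \<Xi>}"

end

theory Submission
  imports Defs
begin

text \<open>
  Each rule pair of \<open>baseM\<close> is an atomic copy of the introduction and elimination rule of
  one connective, and these copies are exactly what the support clauses ask for.  Induction on
  \<open>\<xi>\<close> therefore shows that, in any base extending \<open>baseM\<close>, the atom \<open>\<xi>\<^sup>\<flat>\<close> and the formula
  \<open>\<xi>\<close> are supported by the same multisets: the introduction rule yields \<open>\<xi>\<^sup>\<flat>\<close> from
  support of \<open>\<xi>\<close>, and the elimination rule lets \<open>\<xi>\<^sup>\<flat>\<close> pass every test in the support
  clause of \<open>\<xi>\<close>, instantiated at the atoms \<open>\<sigma>\<^sup>\<flat>\<close>, \<open>\<tau>\<^sup>\<flat>\<close> of the immediate subformulas.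
\<close>

lemma deriv_mono: "deriv B P p \<Longrightarrow> B \<subseteq> C \<Longrightarrow> deriv C P p"
proof (induction rule: deriv.induct)
  case (Ref B p)
  then show ?case by (simp add: deriv.Ref)
next
  case (App prems p B Ss)
  have "list_all2 (\<lambda>S Pq. deriv C (S + fst Pq) (snd Pq)) Ss prems"
    using App(2,3) by (auto elim: list_all2_mono)
  then show ?case using App(1,3) by (auto intro: deriv.App)
qed

lemma deriv_App0: "([], p) \<in> B \<Longrightarrow> deriv B {#} p"
  using deriv.App[of "[]" p B "[]"] by simp

lemma deriv_App1:
  "([(P\<^sub>1, p\<^sub>1)], p) \<in> B \<Longrightarrow> deriv B (S\<^sub>1 + P\<^sub>1) p\<^sub>1 \<Longrightarrow> deriv B S\<^sub>1 p"
  using deriv.App[of "[(P\<^sub>1, p\<^sub>1)]" p B "[S\<^sub>1]"] by simp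

lemma deriv_App2:
  "([(P\<^sub>1, p\<^sub>1), (P\<^sub>2, p\<^sub>2)], p) \<in> B \<Longrightarrow> deriv B (S\<^sub>1 + P\<^sub>1) p\<^sub>1 \<Longrightarrow> deriv B (S\<^sub>2 + P\<^sub>2) p\<^sub>2
   \<Longrightarrow> deriv B (S\<^sub>1 + S\<^sub>2) p"
  using deriv.App[of "[(P\<^sub>1, p\<^sub>1), (P\<^sub>2, p\<^sub>2)]" p B "[S\<^sub>1, S\<^sub>2]"] by simp

lemma deriv_App2_closed:
  "([({#}, p\<^sub>1), ({#}, p\<^sub>2)], p) \<in> B \<Longrightarrow> deriv B S\<^sub>1 p\<^sub>1 \<Longrightarrow> deriv B S\<^sub>2 p\<^sub>2
   \<Longrightarrow> deriv B (S\<^sub>1 + S\<^sub>2) p"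
  using deriv_App2[of "{#}" p\<^sub>1 "{#}" p\<^sub>2 p B S\<^sub>1 S\<^sub>2] by simp

lemma baseM_Lolli_intro: "Lolli \<sigma> \<tau> \<in> \<Xi> \<Longrightarrow> ([({#fl \<sigma>#}, fl \<tau>)], fl (Lolli \<sigma> \<tau>)) \<in> baseM \<Xi> fl"
  unfolding baseM_def by blast

lemma baseM_Lolli_elim:
  "Lolli \<sigma> \<tau> \<in> \<Xi> \<Longrightarrow> ([({#}, fl (Lolli \<sigma> \<tau>)), ({#}, fl \<sigma>)], fl \<tau>) \<in> baseM \<Xi> fl"
  unfolding baseM_def by blast

lemma baseM_Tensor_intro:
  "Tensor \<sigma> \<tau> \<in> \<Xi> \<Longrightarrow> ([({#}, fl \<sigma>), ({#}, fl \<tau>)], fl (Tensor \<sigma> \<tau>)) \<in> baseM \<Xi> fl"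
  unfolding baseM_def by blast

lemma baseM_Tensor_elim:
  "Tensor \<sigma> \<tau> \<in> \<Xi> \<Longrightarrow> ([({#}, fl (Tensor \<sigma> \<tau>)), ({#fl \<sigma>, fl \<tau>#}, p)], p) \<in> baseM \<Xi> fl"
  unfolding baseM_def by blast

lemma baseM_One_intro: "One \<in> \<Xi> \<Longrightarrow> ([], fl One) \<in> baseM \<Xi> fl"
  unfolding baseM_def by auto

lemma baseM_One_elim: "One \<in> \<Xi> \<Longrightarrow> ([({#}, fl One), ({#}, p)], p) \<in> baseM \<Xi> fl"
  unfolding baseM_def by blast

definition subfml_closed :: "'a fml set \<Rightarrow> bool" where
  "subfml_closed \<Xi> \<longleftrightarrow> (\<forall>\<xi>\<in>\<Xi>. subfmls \<xi> \<subseteq> \<Xi>)"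

lemma subfmls_self: "\<xi> \<in> subfmls \<xi>"
  by (cases \<xi>) auto

lemma subfmls_trans: "\<eta> \<in> subfmls \<xi> \<Longrightarrow> subfmls \<eta> \<subseteq> subfmls \<xi>"
  by (induction \<xi>) auto

lemma subfml_closed_Xi: "subfml_closed (Xi \<Gamma> \<phi>)"
  unfolding subfml_closed_def Xi_def using subfmls_trans by blast

lemma subfml_closed_Tensor:
  "subfml_closed \<Xi> \<Longrightarrow> Tensor \<sigma> \<tau> \<in> \<Xi> \<Longrightarrow> \<sigma> \<in> \<Xi> \<and> \<tau> \<in> \<Xi>"
  unfolding subfml_closed_def using subfmls_self by fastforce

lemma subfml_closed_Lolli:
  "subfml_closed \<Xi> \<Longrightarrow> Lolli \<sigma> \<tau> \<in> \<Xi> \<Longrightarrow> \<sigma> \<in> \<Xi> \<and> \<tau> \<in> \<Xi>"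
  unfolding subfml_closed_def using subfmls_self by fastforce

definition flat_simulates :: "'a fml set \<Rightarrow> ('a fml \<Rightarrow> 'a) \<Rightarrow> 'a fml \<Rightarrow> bool" where
  "flat_simulates \<Xi> fl \<xi> \<longleftrightarrow> (\<forall>X U. baseM \<Xi> fl \<subseteq> X \<longrightarrow> (deriv X U (fl \<xi>) \<longleftrightarrow> supp X U \<xi>))"

lemma flat_simulatesD:
  "flat_simulates \<Xi> fl \<xi> \<Longrightarrow> baseM \<Xi> fl \<subseteq> X \<Longrightarrow> deriv X U (fl \<xi>) \<longleftrightarrow> supp X U \<xi>"
  unfolding flat_simulates_def by blast

lemma flat_simulates_supp_flat:
  "flat_simulates \<Xi> fl \<xi> \<Longrightarrow> baseM \<Xi> fl \<subseteq> X \<Longrightarrow> supp X {#fl \<xi>#} \<xi>"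
  using flat_simulatesD[THEN iffD1, OF _ _ deriv.Ref] .

lemma flat_simulates_At: "fl (At p) = p \<Longrightarrow> flat_simulates \<Xi> fl (At p)"
  unfolding flat_simulates_def by simp

lemma flat_simulates_One:
  assumes "One \<in> \<Xi>"
  shows "flat_simulates \<Xi> fl One"
  unfolding flat_simulates_def
proof (intro allI impI iffI)
  fix X U assume M: "baseM \<Xi> fl \<subseteq> X" and d: "deriv X U (fl One)"
  show "supp X U One"
  proof (unfold supp.simps, intro allI impI)
    fix Y U' p assume Y: "X \<subseteq> Y" and e: "deriv Y U' p"
    have "([({#}, fl One), ({#}, p)], p) \<in> Y"
      using M Y baseM_One_elim[OF assms] by (rule subsetD[OF subset_trans])
    then show "deriv Y (U + U') p" using deriv_mono[OF d Y] e by (rule deriv_App2_closed)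
  qed
next
  fix X U assume M: "baseM \<Xi> fl \<subseteq> X" and s: "supp X U One"
  have "deriv X {#} (fl One)"
    using M baseM_One_intro[OF assms] by (rule deriv_App0[OF subsetD])
  then show "deriv X U (fl One)" using s by (metis add_0_right order_refl supp.simps(3))
qed

lemma flat_simulates_Tensor:
  assumes T: "Tensor \<sigma> \<tau> \<in> \<Xi>"
    and \<sigma>: "flat_simulates \<Xi> fl \<sigma>" and \<tau>: "flat_simulates \<Xi> fl \<tau>"
  shows "flat_simulates \<Xi> fl (Tensor \<sigma> \<tau>)"
  unfolding flat_simulates_def
proof (intro allI impI iffI)
  fix X U assume M: "baseM \<Xi> fl \<subseteq> X" and d: "deriv X U (fl (Tensor \<sigma> \<tau>))"
  show "supp X U (Tensor \<sigma> \<tau>)"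
  proof (unfold supp.simps, intro allI impI)
    fix Y U' p assume Y: "X \<subseteq> Y"
      and test: "\<forall>Z V W. Y \<subseteq> Z \<longrightarrow> supp Z V \<sigma> \<longrightarrow> supp Z W \<tau> \<longrightarrow> deriv Z (U' + (V + W)) p"
    have MY: "baseM \<Xi> fl \<subseteq> Y" using M Y by (rule subset_trans)
    have "deriv Y (U' + ({#fl \<sigma>#} + {#fl \<tau>#})) p"
      using test flat_simulates_supp_flat[OF \<sigma> MY] flat_simulates_supp_flat[OF \<tau> MY] by blast
    then have c: "deriv Y (U' + {#fl \<sigma>, fl \<tau>#}) p" by (simp add: add_mset_commute)
    have r: "([({#}, fl (Tensor \<sigma> \<tau>)), ({#fl \<sigma>, fl \<tau>#}, p)], p) \<in> Y"
      using MY baseM_Tensor_elim[OF T] by blast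
    have "deriv Y (U + {#}) (fl (Tensor \<sigma> \<tau>))" using deriv_mono[OF d Y] by simp
    from deriv_App2[OF r this c] show "deriv Y (U + U') p" .
  qed
next
  fix X U assume M: "baseM \<Xi> fl \<subseteq> X" and s: "supp X U (Tensor \<sigma> \<tau>)"
  have "deriv Y ({#} + (V + W)) (fl (Tensor \<sigma> \<tau>))"
    if Y: "X \<subseteq> Y" and v: "supp Y V \<sigma>" and w: "supp Y W \<tau>" for Y V W
  proof -
    have MY: "baseM \<Xi> fl \<subseteq> Y" using M Y by (rule subset_trans)
    have r: "([({#}, fl \<sigma>), ({#}, fl \<tau>)], fl (Tensor \<sigma> \<tau>)) \<in> Y"
      using MY baseM_Tensor_intro[OF T] by blast
    have "deriv Y V (fl \<sigma>)" using flat_simulatesD[OF \<sigma> MY] v by simp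
    moreover have "deriv Y W (fl \<tau>)" using flat_simulatesD[OF \<tau> MY] w by simp
    ultimately show ?thesis using deriv_App2_closed[OF r] by simp
  qed
  then have "deriv X (U + {#}) (fl (Tensor \<sigma> \<tau>))" using s unfolding supp.simps by blast
  then show "deriv X U (fl (Tensor \<sigma> \<tau>))" by simp
qed

lemma flat_simulates_Lolli:
  assumes L: "Lolli \<sigma> \<tau> \<in> \<Xi>"
    and \<sigma>: "flat_simulates \<Xi> fl \<sigma>" and \<tau>: "flat_simulates \<Xi> fl \<tau>"
  shows "flat_simulates \<Xi> fl (Lolli \<sigma> \<tau>)"
  unfolding flat_simulates_def
proof (intro allI impI iffI)
  fix X U assume M: "baseM \<Xi> fl \<subseteq> X" and d: "deriv X U (fl (Lolli \<sigma> \<tau>))"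
  show "supp X U (Lolli \<sigma> \<tau>)"
  proof (unfold supp.simps, intro allI impI)
    fix Y U' assume Y: "X \<subseteq> Y" and v: "supp Y U' \<sigma>"
    have MY: "baseM \<Xi> fl \<subseteq> Y" using M Y by (rule subset_trans)
    have r: "([({#}, fl (Lolli \<sigma> \<tau>)), ({#}, fl \<sigma>)], fl \<tau>) \<in> Y"
      using MY baseM_Lolli_elim[OF L] by blast
    have "deriv Y U' (fl \<sigma>)" using flat_simulatesD[OF \<sigma> MY] v by simp
    with deriv_App2_closed[OF r deriv_mono[OF d Y]] have "deriv Y (U + U') (fl \<tau>)" .
    then show "supp Y (U + U') \<tau>" using flat_simulatesD[OF \<tau> MY] by simp
  qed
next
  fix X U assume M: "baseM \<Xi> fl \<subseteq> X" and s: "supp X U (Lolli \<sigma> \<tau>)"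
  have "supp X (U + {#fl \<sigma>#}) \<tau>"
    using s flat_simulates_supp_flat[OF \<sigma> M] unfolding supp.simps by blast
  then have "deriv X (U + {#fl \<sigma>#}) (fl \<tau>)" using flat_simulatesD[OF \<tau> M] by simp
  moreover have "([({#fl \<sigma>#}, fl \<tau>)], fl (Lolli \<sigma> \<tau>)) \<in> X"
    using M baseM_Lolli_intro[OF L] by blast
  ultimately show "deriv X U (fl (Lolli \<sigma> \<tau>))" by (rule deriv_App1[rotated])
qed

lemma flat_simulates_subfml_closed:
  assumes closed: "subfml_closed \<Xi>" and atoms: "\<And>p. At p \<in> \<Xi> \<Longrightarrow> fl (At p) = p"
    and "\<xi> \<in> \<Xi>"
  shows "flat_simulates \<Xi> fl \<xi>"
  using \<open>\<xi> \<in> \<Xi>\<close>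
proof (induction \<xi>)
  case (At p)
  show ?case using atoms[OF At] by (rule flat_simulates_At)
next
  case (Tensor \<sigma> \<tau>)
  from subfml_closed_Tensor[OF closed Tensor.prems] have "\<sigma> \<in> \<Xi>" "\<tau> \<in> \<Xi>" by auto
  then show ?case using Tensor.prems Tensor.IH by (intro flat_simulates_Tensor)
next
  case One
  show ?case using One by (rule flat_simulates_One)
next
  case (Lolli \<sigma> \<tau>)
  from subfml_closed_Lolli[OF closed Lolli.prems] have "\<sigma> \<in> \<Xi>" "\<tau> \<in> \<Xi>" by auto
  then show ?case using Lolli.prems Lolli.IH by (intro flat_simulates_Lolli)
qed

theorem mainTheorem14:
  fixes \<Gamma> :: "('a::countable) fml multiset" and \<phi> :: "'a fml" and fl :: "'a fml \<Rightarrow> 'a"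
  assumes "infinite (UNIV :: 'a set)"
    and "flat_ok (Xi \<Gamma> \<phi>) fl"
  shows "\<forall>\<xi>\<in>Xi \<Gamma> \<phi>. \<forall>X U. baseM (Xi \<Gamma> \<phi>) fl \<subseteq> X \<longrightarrow>
           (supp X U (At (fl \<xi>)) \<longleftrightarrow> supp X U \<xi>)"
proof (intro ballI)
  fix \<xi> assume \<xi>: "\<xi> \<in> Xi \<Gamma> \<phi>"
  have atoms: "fl (At p) = p" if "At p \<in> Xi \<Gamma> \<phi>" for p
    using assms(2) that unfolding flat_ok_def by blast
  have "flat_simulates (Xi \<Gamma> \<phi>) fl \<xi>"
    using subfml_closed_Xi atoms \<xi> by (rule flat_simulates_subfml_closed)
  then show "\<forall>X U. baseM (Xi \<Gamma> \<phi>) fl \<subseteq> X \<longrightarrow> (supp X U (At (fl \<xi>)) \<longleftrightarrow> supp X U \<xi>)"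
    unfolding flat_simulates_def by simp
qed

end
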